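(* Consider problem (P) and suppose Assumptions A, B, C and E hold. If $\bar F$ is a KL function with exponent $\alpha\in[0,1)$, then $F$ is also a KL function with exponent $\alpha$.
   Context: Problem (P): $\min_{x\in\mathbb R^n}F(x):=f(x)+P_1(x)-P_2(x)+\delta_{\{g\le 0\}}(x)$, where $f:\mathbb R^n\to\mathbb R$ is continuously differentiable, $P_1,P_2:\mathbb R^n\to\mathbb R$ are convex and continuous, $g=(g_1,\dots,g_m):\mathbb R^n\to\mathbb R^m$ is continuous with $\{x:g(x)\le0\}\neq\emptyset$ (componentwise inequalities), $\delta_C$ the indicator function of $C$; $\partial$ is the limiting subdifferential. Assumption A: (i) $\nabla f$ is Lipschitz with modulus $L_f$; (ii) each $g_i$ is differentiable with $\nabla g_i$ Lipschitz with modulus $L_{g_i}$; (iii) $F$ is level-bounded. Assumption B (MFCQ): each $g_i$ is continuously differentiable and for every $x$ with $g(x)\le0$ there is $d$ with $\langle\nabla g_i(x),d\rangle<0$ for all $i\in I(x):=\{j:g_j(x)=0\}$. Assumption C: each $g_i$ is twice continuously differentiable. Assumption E: $P_2\equiv0$ and $f,g_1,\dots,g_m$ are convex. $\bar G(x,y,w)\in\mathbb R^m$ ($x,y\in\mathbb R^n,w\in\mathbb R^m$) has components $\bar G_i(x,y,w)=g_i(y)+\langle\nabla g_i(y),x-y\rangle+\frac{w_i}{2}\|x-y\|^2$, and $\bar F(x,y,w):=f(x)+P_1(x)-P_2(x)+\delta_{\{\bar G\le0\}}(x,y,w)$. KL function with exponent $\alpha\in[0,1)$: a proper closed $h$ such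 that at every $\hat x\in{\rm dom}\,\partial h$ there exist $a\in(0,\infty]$, a neighborhood $V$ of $\hat x$ and $a_0>0$ with $a_0(1-\alpha)(h(x)-h(\hat x))^{-\alpha}\,{\rm dist}(0,\partial h(x))\ge1$ for all $x\in V$ with $h(\hat x)<h(x)<h(\hat x)+a$. *)

theory Defs
  imports "HOL-Analysis.Analysis"
begin

definition proper_closed :: "('a::euclidean_space \<Rightarrow> ereal) \<Rightarrow> bool" where
  "proper_closed h \<longleftrightarrow> (\<forall>x. h x \<noteq> -\<infinity>) \<and> (\<exists>x. h x \<noteq> \<infinity>) \<and>
     (\<forall>x xk. xk \<longlonglongrightarrow> x \<longrightarrow> h x \<le> liminf (\<lambda>k. h (xk k)))"

definition frechet_subdiff :: "('a::euclidean_space \<Rightarrow> ereal) \<Rightarrow> 'a \<Rightarrow> 'a set" where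
  "frechet_subdiff h x = {v. \<bar>h x\<bar> \<noteq> \<infinity> \<and>
     (\<forall>\<epsilon>>0. \<exists>\<delta>>0. \<forall>z. norm (z - x) < \<delta> \<longrightarrow>
        h z \<ge> h x + ereal (v \<bullet> (z - x) - \<epsilon> * norm (z - x)))}"

definition limiting_subdiff :: "('a::euclidean_space \<Rightarrow> ereal) \<Rightarrow> 'a \<Rightarrow> 'a set" where
  "limiting_subdiff h x = {v. \<bar>h x\<bar> \<noteq> \<infinity> \<and>
     (\<exists>xk vk. xk \<longlonglongrightarrow> x \<and> (\<lambda>k. h (xk k)) \<longlonglongrightarrow> h x \<and>
        (\<forall>k. vk k \<in> frechet_subdiff h (xk k)) \<and> vk \<longlonglongrightarrow> v)}"

text \<open>KL function with exponent alpha. Convention dist(0, {}) = +infinity, so points with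
  empty subdifferential satisfy the inequality vacuously.\<close>
definition KL_exponent :: "('a::euclidean_space \<Rightarrow> ereal) \<Rightarrow> real \<Rightarrow> bool" where
  "KL_exponent h \<alpha> \<longleftrightarrow> proper_closed h \<and>
     (\<forall>xh. limiting_subdiff h xh \<noteq> {} \<longrightarrow>
        (\<exists>a::ereal. a > 0 \<and> (\<exists>V. open V \<and> xh \<in> V \<and> (\<exists>a0::real. a0 > 0 \<and>
          (\<forall>x\<in>V. h xh < h x \<and> h x < h xh + a \<longrightarrow> limiting_subdiff h x \<noteq> {} \<longrightarrow>
             a0 * (1 - \<alpha>) * (real_of_ereal (h x) - real_of_ereal (h xh)) powr (- \<alpha>)
               * infdist 0 (limiting_subdiff h x) \<ge> 1)))))"

definition Fobj :: "(real^'n \<Rightarrow> real) \<Rightarrow> (real^'n \<Rightarrow> real) \<Rightarrow> (real^'n \<Rightarrow> real)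
     \<Rightarrow> (real^'n \<Rightarrow> real^'m) \<Rightarrow> real^'n \<Rightarrow> ereal" where
  "Fobj f P1 P2 g x = (if \<forall>i. g x $ i \<le> 0 then ereal (f x + P1 x - P2 x) else \<infinity>)"

definition Gbar :: "(real^'n \<Rightarrow> real^'m) \<Rightarrow> ('m \<Rightarrow> real^'n \<Rightarrow> real^'n)
     \<Rightarrow> real^'n \<Rightarrow> real^'n \<Rightarrow> real^'m \<Rightarrow> 'm \<Rightarrow> real" where
  "Gbar g Dg x y w i = g y $ i + Dg i y \<bullet> (x - y) + w $ i / 2 * (norm (x - y))\<^sup>2"

definition Fbar :: "(real^'n \<Rightarrow> real) \<Rightarrow> (real^'n \<Rightarrow> real) \<Rightarrow> (real^'n \<Rightarrow> real)
     \<Rightarrow> (real^'n \<Rightarrow> real^'m) \<Rightarrow> ('m \<Rightarrow> real^'n \<Rightarrow> real^'n)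
     \<Rightarrow> (real^'n) \<times> (real^'n) \<times> (real^'m) \<Rightarrow> ereal" where
  "Fbar f P1 P2 g Dg = (\<lambda>(x, y, w). if \<forall>i. Gbar g Dg x y w i \<le> 0
       then ereal (f x + P1 x - P2 x) else \<infinity>)"

end

theory Submission imports Defs begin

(*
  F is the restriction of Fbar to the slice x \<mapsto> (x, x, w) for a fixed w with
  w_i \<ge> 2 L_{g_i} + 1.  By the descent lemma, u_i \<ge> 2 L_{g_i} makes Gbar(z, y, u) \<le> 0 force
  g(z) \<le> 0, so Fbar(z, y, u) \<ge> F(z) near the slice, with equality on it.  Hence every regular,
  and then every limiting, subgradient v of F at x yields the subgradient (v, 0, 0) of Fbar at
  (x, x, w); thus dist(0, \<partial>Fbar(x, x, w)) \<le> dist(0, \<partial>F(x)) and the KL inequality of Fbar pulls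
  back along the slice.
*)

lemma lipschitz_gradient_upper_bound:
  fixes G :: "'a::real_inner \<Rightarrow> real" and DG :: "'a \<Rightarrow> 'a"
  assumes der: "\<And>x. (G has_derivative (\<lambda>h. DG x \<bullet> h)) (at x)"
    and lip: "L-lipschitz_on UNIV DG"
  shows "G z \<le> G y + DG y \<bullet> (z - y) + L * (norm (z - y))\<^sup>2"
proof -
  define d where "d = z - y"
  define \<phi> where "\<phi> = (\<lambda>t::real. G (y + t *\<^sub>R d))"
  have "(\<phi> has_derivative (\<lambda>h. DG (y + t *\<^sub>R d) \<bullet> (h *\<^sub>R d))) (at t within {0..1})" for t
  proof -
    have "((\<lambda>t::real. y + t *\<^sub>R d) has_derivative (\<lambda>h. h *\<^sub>R d)) (at t within {0..1})"
      by (auto intro!: derivative_eq_intros)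
    from has_derivative_compose[OF this der] show ?thesis
      unfolding \<phi>_def by (simp add: comp_def)
  qed
  from mvt_simple[of 0 1 \<phi>, OF _ this] obtain t where t: "t \<in> {0<..<1}"
    and eq: "\<phi> 1 - \<phi> 0 = DG (y + t *\<^sub>R d) \<bullet> d" by auto
  have "G z - G y - DG y \<bullet> d = (DG (y + t *\<^sub>R d) - DG y) \<bullet> d"
    using eq unfolding \<phi>_def d_def by (simp add: inner_diff_left)
  also have "\<dots> \<le> norm (DG (y + t *\<^sub>R d) - DG y) * norm d"
    by (rule norm_cauchy_schwarz)
  also have "\<dots> \<le> (L * norm (t *\<^sub>R d)) * norm d"
    using lipschitz_onD[OF lip, of "y + t *\<^sub>R d" y]
    by (intro mult_right_mono) (auto simp: dist_norm)
  also have "\<dots> \<le> (L * norm d) * norm d"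
    using t lipschitz_on_nonneg[OF lip]
    by (intro mult_right_mono mult_left_mono) (auto intro: mult_left_le_one_le)
  finally show ?thesis unfolding d_def by (simp add: power2_eq_square algebra_simps)
qed

lemma frechet_subdiff_lift_to_majorant:
  fixes h :: "'a::euclidean_space \<Rightarrow> ereal" and H :: "'a \<times> 'b::euclidean_space \<Rightarrow> ereal"
  assumes diag: "H (x, y) = h x"
    and r: "r > 0" "\<And>p. norm (p - (x, y)) < r \<Longrightarrow> h (fst p) \<le> H p"
    and v: "v \<in> frechet_subdiff h x"
  shows "(v, 0) \<in> frechet_subdiff H (x, y)"
proof -
  have "\<exists>\<delta>>0. \<forall>p. norm (p - (x, y)) < \<delta> \<longrightarrow>
          H p \<ge> H (x, y) + ereal ((v, 0) \<bullet> (p - (x, y)) - \<epsilon> * norm (p - (x, y)))"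
    if \<epsilon>: "\<epsilon> > 0" for \<epsilon>
  proof -
    from v \<epsilon> obtain \<delta> where \<delta>: "\<delta> > 0"
      and near: "\<And>z. norm (z - x) < \<delta> \<Longrightarrow> h z \<ge> h x + ereal (v \<bullet> (z - x) - \<epsilon> * norm (z - x))"
      unfolding frechet_subdiff_def by blast
    show ?thesis
    proof (intro exI[of _ "min \<delta> r"] conjI allI impI)
      show "min \<delta> r > 0" using \<delta> r by simp
      fix p :: "'a \<times> 'b"
      assume p: "norm (p - (x, y)) < min \<delta> r"
      have fst_le: "norm (fst p - x) \<le> norm (p - (x, y))"
        using norm_fst_le[of "fst p - x" "snd p - y"] by (cases p) simp
      have "ereal ((v, 0) \<bullet> (p - (x, y)) - \<epsilon> * norm (p - (x, y)))
            \<le> ereal (v \<bullet> (fst p - x) - \<epsilon> * norm (fst p - x))"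
        using fst_le \<epsilon> by (cases p) (simp add: inner_Pair)
      hence "H (x, y) + ereal ((v, 0) \<bullet> (p - (x, y)) - \<epsilon> * norm (p - (x, y)))
            \<le> h x + ereal (v \<bullet> (fst p - x) - \<epsilon> * norm (fst p - x))"
        unfolding diag by (rule add_left_mono)
      also have "\<dots> \<le> h (fst p)" using near fst_le p by simp
      also have "\<dots> \<le> H p" using r(2) p by simp
      finally show "H p \<ge> H (x, y) + ereal ((v, 0) \<bullet> (p - (x, y)) - \<epsilon> * norm (p - (x, y)))" .
    qed
  qed
  moreover have "\<bar>H (x, y)\<bar> \<noteq> \<infinity>" using v diag by (simp add: frechet_subdiff_def)
  ultimately show ?thesis unfolding frechet_subdiff_def by simp
qed

lemma limiting_subdiff_lift:
  fixes h :: "'a::euclidean_space \<Rightarrow> ereal" and H :: "'a \<times> 'b::euclidean_space \<Rightarrow> ereal"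
  assumes diag: "\<And>x. H (x, c x) = h x"
    and c: "continuous_on UNIV c"
    and frechet_lift: "\<And>x v. v \<in> frechet_subdiff h x \<Longrightarrow> (v, 0) \<in> frechet_subdiff H (x, c x)"
    and v: "v \<in> limiting_subdiff h x"
  shows "(v, 0) \<in> limiting_subdiff H (x, c x)"
proof -
  have fin: "\<bar>h x\<bar> \<noteq> \<infinity>" and "\<exists>xk vk. xk \<longlonglongrightarrow> x \<and> (\<lambda>k. h (xk k)) \<longlonglongrightarrow> h x \<and>
      (\<forall>k. vk k \<in> frechet_subdiff h (xk k)) \<and> vk \<longlonglongrightarrow> v"
    using v unfolding limiting_subdiff_def by auto
  then obtain xk vk :: "nat \<Rightarrow> 'a" where xk: "xk \<longlonglongrightarrow> x"
    and hk: "(\<lambda>k. h (xk k)) \<longlonglongrightarrow> h x"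
    and vk: "\<forall>k. vk k \<in> frechet_subdiff h (xk k)" and vv: "vk \<longlonglongrightarrow> v"
    by blast
  have "(\<lambda>k. (xk k, c (xk k))) \<longlonglongrightarrow> (x, c x)"
    using continuous_on_tendsto_compose[OF c xk] by (intro tendsto_Pair xk) simp_all
  moreover have "(\<lambda>k. (vk k, 0::'b)) \<longlonglongrightarrow> (v, 0)"
    by (intro tendsto_Pair vv tendsto_const)
  ultimately show ?thesis
    unfolding limiting_subdiff_def mem_Collect_eq diag
    using fin hk frechet_lift[OF vk[rule_format]]
    by (intro conjI exI[of _ "\<lambda>k. (xk k, c (xk k))"] exI[of _ "\<lambda>k. (vk k, 0)"]) (simp_all add: diag)
qed

lemma infdist_0_le_of_lift:
  fixes S :: "'a::real_normed_vector set" and T :: "('a \<times> 'b::real_normed_vector) set"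
  assumes "S \<noteq> {}" "\<And>s. s \<in> S \<Longrightarrow> (s, 0) \<in> T"
  shows "infdist 0 T \<le> infdist 0 S"
proof -
  have "infdist 0 T \<le> dist 0 s" if "s \<in> S" for s
    using infdist_le[OF assms(2)[OF that], of 0] by (simp add: dist_norm norm_Pair)
  thus ?thesis unfolding infdist_notempty[OF assms(1)]
    by (intro cINF_greatest assms(1)) auto
qed

lemma KL_exponent_lift:
  fixes h :: "'a::euclidean_space \<Rightarrow> ereal" and H :: "'a \<times> 'b::euclidean_space \<Rightarrow> ereal"
  assumes KL: "KL_exponent H \<alpha>" and \<alpha>: "\<alpha> \<le> 1" and closed: "proper_closed h"
    and diag: "\<And>x. H (x, c x) = h x"
    and c: "continuous_on UNIV c"
    and lift: "\<And>x v. v \<in> limiting_subdiff h x \<Longrightarrow> (v, 0) \<in> limiting_subdiff H (x, c x)"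
  shows "KL_exponent h \<alpha>"
  unfolding KL_exponent_def
proof (intro conjI closed allI impI)
  fix xh assume "limiting_subdiff h xh \<noteq> {}"
  hence "limiting_subdiff H (xh, c xh) \<noteq> {}" using lift by blast
  with KL obtain a V a0 where a: "a > 0" and V: "open V" "(xh, c xh) \<in> V" and a0: "a0 > 0"
    and ineq: "\<And>p. p \<in> V \<Longrightarrow> H (xh, c xh) < H p \<and> H p < H (xh, c xh) + a \<Longrightarrow>
       limiting_subdiff H p \<noteq> {} \<Longrightarrow>
       a0 * (1 - \<alpha>) * (real_of_ereal (H p) - real_of_ereal (H (xh, c xh))) powr (- \<alpha>)
         * infdist 0 (limiting_subdiff H p) \<ge> 1"
    unfolding KL_exponent_def by blast
  define U where "U = (\<lambda>x. (x, c x)) -` V"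
  have "open U"
    unfolding U_def by (rule open_vimage[OF V(1)]) (intro continuous_intros c)
  moreover have "xh \<in> U" using V(2) by (simp add: U_def)
  moreover have "a0 * (1 - \<alpha>) * (real_of_ereal (h x) - real_of_ereal (h xh)) powr (- \<alpha>)
      * infdist 0 (limiting_subdiff h x) \<ge> 1"
    if x: "x \<in> U" "h xh < h x \<and> h x < h xh + a" and ne: "limiting_subdiff h x \<noteq> {}" for x
  proof -
    let ?K = "a0 * (1 - \<alpha>) * (real_of_ereal (h x) - real_of_ereal (h xh)) powr (- \<alpha>)"
    have "limiting_subdiff H (x, c x) \<noteq> {}" using ne lift by blast
    with ineq[of "(x, c x)"] x have "1 \<le> ?K * infdist 0 (limiting_subdiff H (x, c x))"
      by (simp add: U_def diag)
    also have "\<dots> \<le> ?K * infdist 0 (limiting_subdiff h x)"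
      using a0 \<alpha> infdist_0_le_of_lift[OF ne lift] by (intro mult_left_mono) simp_all
    finally show ?thesis .
  qed
  ultimately show "\<exists>a>0. \<exists>U. open U \<and> xh \<in> U \<and> (\<exists>a0>0. \<forall>x\<in>U.
      h xh < h x \<and> h x < h xh + a \<longrightarrow> limiting_subdiff h x \<noteq> {} \<longrightarrow>
      a0 * (1 - \<alpha>) * (real_of_ereal (h x) - real_of_ereal (h xh)) powr (- \<alpha>)
        * infdist 0 (limiting_subdiff h x) \<ge> 1)"
    using a a0 by blast
qed

lemma Fobj_proper_closed:
  fixes f P1 P2 :: "real^'n \<Rightarrow> real" and g :: "real^'n \<Rightarrow> real^'m"
  assumes cf: "continuous_on UNIV (\<lambda>x. f x + P1 x - P2 x)"
    and cg: "continuous_on UNIV g"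
    and feasible: "\<exists>x. \<forall>i. g x $ i \<le> 0"
  shows "proper_closed (Fobj f P1 P2 g)"
  unfolding proper_closed_def
proof (intro conjI allI impI)
  show "\<And>x. Fobj f P1 P2 g x \<noteq> - \<infinity>" by (simp add: Fobj_def)
  show "\<exists>x. Fobj f P1 P2 g x \<noteq> \<infinity>" using feasible by (auto simp: Fobj_def)
  fix x and xk :: "nat \<Rightarrow> real^'n"
  assume xk: "xk \<longlonglongrightarrow> x"
  let ?c = "\<lambda>x. f x + P1 x - P2 x"
  have ge: "\<And>z. Fobj f P1 P2 g z \<ge> ereal (?c z)" by (simp add: Fobj_def)
  show "Fobj f P1 P2 g x \<le> liminf (\<lambda>k. Fobj f P1 P2 g (xk k))"
    unfolding le_Liminf_iff
  proof (intro allI impI)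
    fix y assume y: "y < Fobj f P1 P2 g x"
    show "\<forall>\<^sub>F k in sequentially. y < Fobj f P1 P2 g (xk k)"
    proof (cases "\<forall>i. g x $ i \<le> 0")
      case True
      hence Fx: "Fobj f P1 P2 g x = ereal (?c x)" by (simp add: Fobj_def)
      have lim: "(\<lambda>k. ereal (?c (xk k))) \<longlonglongrightarrow> ereal (?c x)"
        using continuous_on_tendsto_compose[OF cf xk] by (simp add: lim_ereal)
      have "\<forall>\<^sub>F k in sequentially. y < ereal (?c (xk k))"
        using order_tendstoD(1)[OF lim] y Fx by simp
      thus ?thesis by eventually_elim (use ge in \<open>blast intro: less_le_trans\<close>)
    next
      case False
      then obtain i where gi: "g x $ i > 0" by (auto simp: not_le)
      have "(\<lambda>k. g (xk k) $ i) \<longlonglongrightarrow> g x $ i"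
        using tendsto_vec_nth[OF continuous_on_tendsto_compose[OF cg xk]] by simp
      hence ev: "\<forall>\<^sub>F k in sequentially. g (xk k) $ i > 0" using gi order_tendstoD(1) by blast
      have yi: "y < \<infinity>" using y by auto
      show ?thesis using ev
      proof eventually_elim
        case (elim k)
        hence "Fobj f P1 P2 g (xk k) = \<infinity>" by (auto simp: Fobj_def not_le)
        thus ?case using yi by simp
      qed
    qed
  qed
qed

lemma Fbar_diag: "Fbar f P1 P2 g Dg (x, x, w) = Fobj f P1 P2 g x"
  by (simp add: Fbar_def Gbar_def Fobj_def)

lemma Fobj_le_Fbar:
  fixes g :: "real^'n \<Rightarrow> real^'m" and Dg :: "'m \<Rightarrow> real^'n \<Rightarrow> real^'n"
  assumes desc: "\<And>i y z. g z $ i \<le> g y $ i + Dg i y \<bullet> (z - y) + Lg i * (norm (z - y))\<^sup>2"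
    and u: "\<And>i. 2 * Lg i \<le> u $ i"
  shows "Fobj f P1 P2 g z \<le> Fbar f P1 P2 g Dg (z, y, u)"
proof (cases "\<forall>i. Gbar g Dg z y u i \<le> 0")
  case True
  have "g z $ i \<le> 0" for i
  proof -
    have "Lg i * (norm (z - y))\<^sup>2 \<le> u $ i / 2 * (norm (z - y))\<^sup>2"
      using u[of i] by (intro mult_right_mono) auto
    moreover have "Gbar g Dg z y u i \<le> 0" using True by blast
    ultimately show ?thesis using desc[of z i y] unfolding Gbar_def by linarith
  qed
  with True show ?thesis by (simp add: Fbar_def Fobj_def)
qed (auto simp: Fbar_def)

lemma limiting_subdiff_Fobj_lift:
  fixes g :: "real^'n \<Rightarrow> real^'m" and Dg :: "'m \<Rightarrow> real^'n \<Rightarrow> real^'n"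
  assumes desc: "\<And>i y z. g z $ i \<le> g y $ i + Dg i y \<bullet> (z - y) + Lg i * (norm (z - y))\<^sup>2"
    and w: "\<And>i. 2 * Lg i + 1 \<le> w $ i"
    and v: "v \<in> limiting_subdiff (Fobj f P1 P2 g) x"
  shows "(v, 0) \<in> limiting_subdiff (Fbar f P1 P2 g Dg) (x, x, w)"
proof -
  have "(v, 0) \<in> frechet_subdiff (Fbar f P1 P2 g Dg) (x, x, w)"
    if "v \<in> frechet_subdiff (Fobj f P1 P2 g) x" for x v
  proof (rule frechet_subdiff_lift_to_majorant[where H = "Fbar f P1 P2 g Dg" and y = "(x, w)"])
    show "Fbar f P1 P2 g Dg (x, x, w) = Fobj f P1 P2 g x" by (rule Fbar_diag)
  next
    fix p :: "(real^'n) \<times> (real^'n) \<times> (real^'m)"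
    assume p: "norm (p - (x, x, w)) < 1"
    obtain z y u where p_def: "p = (z, y, u)" by (cases p)
    have "\<bar>u $ i - w $ i\<bar> < 1" for i
      using component_le_norm_cart[of "u - w" i] norm_snd_le[of "u - w" "y - x"]
        norm_snd_le[of "(y - x, u - w)" "z - x"] p
      by (simp add: p_def)
    hence "2 * Lg i \<le> u $ i" for i using w[of i] by (smt (verit))
    thus "Fobj f P1 P2 g (fst p) \<le> Fbar f P1 P2 g Dg p"
      unfolding p_def by (simp add: Fobj_le_Fbar[OF desc])
  qed (use that in simp_all)
  from limiting_subdiff_lift[where c = "\<lambda>x. (x, w)", OF Fbar_diag _ this v] show ?thesis
    by (simp add: continuous_on_Pair)
qed

theorem mainTheorem12:
  fixes f P1 P2 :: "real^'n \<Rightarrow> real"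
    and g :: "real^'n \<Rightarrow> real^'m"
    and Df :: "real^'n \<Rightarrow> real^'n"
    and Dg :: "'m \<Rightarrow> real^'n \<Rightarrow> real^'n"
    and Hg :: "'m \<Rightarrow> real^'n \<Rightarrow> real^'n^'n"
    and \<alpha> :: real
  assumes f_grad: "\<And>x. (f has_derivative (\<lambda>h. Df x \<bullet> h)) (at x)"
    and f_C1: "continuous_on UNIV Df"
    and P1_convex: "convex_on UNIV P1" and P1_cont: "continuous_on UNIV P1"
    and P2_convex: "convex_on UNIV P2" and P2_cont: "continuous_on UNIV P2"
    and g_cont: "continuous_on UNIV g"
    and feasible: "\<exists>x. \<forall>i. g x $ i \<le> 0"
    and A1: "\<exists>Lf. Lf-lipschitz_on UNIV Df"
    and A2_grad: "\<And>i x. ((\<lambda>z. g z $ i) has_derivative (\<lambda>h. Dg i x \<bullet> h)) (at x)"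
    and A2_lip: "\<And>i. \<exists>Lg. Lg-lipschitz_on UNIV (Dg i)"
    and A3: "\<And>r::real. bounded {x. Fobj f P1 P2 g x \<le> ereal r}"
    and B_C1: "\<And>i. continuous_on UNIV (Dg i)"
    and B_MFCQ: "\<And>x. (\<forall>i. g x $ i \<le> 0) \<Longrightarrow>
                   \<exists>d. \<forall>i. g x $ i = 0 \<longrightarrow> Dg i x \<bullet> d < 0"
    and C_hess: "\<And>i x. (Dg i has_derivative (\<lambda>h. Hg i x *v h)) (at x)"
    and C_cont: "\<And>i. continuous_on UNIV (Hg i)"
    and E_P2: "\<And>x. P2 x = 0"
    and E_f: "convex_on UNIV f"
    and E_g: "\<And>i. convex_on UNIV (\<lambda>x. g x $ i)"
    and alpha: "0 \<le> \<alpha>" "\<alpha> < 1"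
    and KL_bar: "KL_exponent (Fbar f P1 P2 g Dg) \<alpha>"
  shows "KL_exponent (Fobj f P1 P2 g) \<alpha>"
proof -
  obtain Lg where Lg: "\<And>i. (Lg i)-lipschitz_on UNIV (Dg i)" using A2_lip by metis
  define w :: "real^'m" where "w = (\<chi> i. 2 * Lg i + 1)"
  have "continuous_on UNIV f"
    using f_grad by (intro continuous_at_imp_continuous_on) (blast intro: has_derivative_continuous)
  hence "proper_closed (Fobj f P1 P2 g)"
    by (intro Fobj_proper_closed continuous_intros P1_cont P2_cont g_cont feasible)
  moreover have "(v, 0) \<in> limiting_subdiff (Fbar f P1 P2 g Dg) (x, x, w)"
    if "v \<in> limiting_subdiff (Fobj f P1 P2 g) x" for x v
    using limiting_subdiff_Fobj_lift[OF lipschitz_gradient_upper_bound[OF A2_grad Lg] _ that]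
    by (simp add: w_def)
  ultimately show ?thesis
    using alpha by (intro KL_exponent_lift[where c = "\<lambda>x. (x, w)", OF KL_bar] Fbar_diag)
      (simp_all add: continuous_on_Pair)
qed

end
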